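(* Fix $z\in M$ and $E\in H(M)$ such that the $\mathbb R$-orbit of $z$ meets $H^{-1}(E)$ at $z_E$, and let $\tau(z,E)\in\mathbb R$ with $e^{\tau(z,E)}\cdot z_E=z$. Then \[ b(z,E)=\varphi(z)+u(2E;z),\qquad \partial_E b(z,E)=-2\tau(z,E),\qquad \partial_E^2 b(z,E)=\frac{4}{\partial_\rho^2\varphi(z_E)}. \] Hence $E\mapsto b(z,E)$ is strictly convex with minimum value $0$ attained at $E=H(z)$.
   Context: $M$ is a compact Kähler manifold with positive Hermitian holomorphic line bundle $(L,h)$; a holomorphic Hamiltonian $S^1$-action generated by $H:M\to\mathbb R$ (lifting to $L$, preserving $h$) extends to a holomorphic $\mathbb C^*$-action $z\mapsto e^{\rho+i\theta}\cdot z$, the $\mathbb R$-part $e^\rho\cdot z$ moving along the gradient of $H$. $\partial_\rho f(z)=\frac{d}{d\rho}|_{\rho=0}f(e^\rho\cdot z)$. $\varphi$ is the $S^1$-invariant local Kähler potential $\|e_L\|_h^2=e^{-\varphi}$ of a local $\mathbb C^*$-invariant holomorphic frame, so that $H=\frac12\partial_\rho\varphi$ and $\rho\mapsto\varphi(e^\rho\cdot z)$ is smooth and strictly convex. The leafwise symplectic potential is the Legendre transform $u(I;z)=\sup_{\rho\in\mathbb R}\bigl(I\rho-\varphi(e^\rho\cdot z)\bigr)$. $b(z,E)=2\int_0^{\tau(z,E)}\bigl(H(e^\sigma\cdot z_E)-E\bigr)d\sigma$. *)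

theory Defs
  imports "HOL-Analysis.Analysis"
begin

text \<open>Abstract setting. \<open>act \<rho> w\<close> is the real part \<open>e\<^sup>\<rho> \<cdot> w\<close> of the holomorphic
  C*-action on the points of M (type 'm); \<open>phi\<close> is the S1-invariant local Kaehler
  potential, \<open>H\<close> the Hamiltonian.\<close>

definition rho_deriv :: "(real \<Rightarrow> 'm \<Rightarrow> 'm) \<Rightarrow> ('m \<Rightarrow> real) \<Rightarrow> 'm \<Rightarrow> real" where
  "rho_deriv act f w = deriv (\<lambda>r. f (act r w)) 0"

definition rho_deriv2 :: "(real \<Rightarrow> 'm \<Rightarrow> 'm) \<Rightarrow> ('m \<Rightarrow> real) \<Rightarrow> 'm \<Rightarrow> real" where
  "rho_deriv2 act f w = deriv (deriv (\<lambda>r. f (act r w))) 0"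

definition sympot :: "(real \<Rightarrow> 'm \<Rightarrow> 'm) \<Rightarrow> ('m \<Rightarrow> real) \<Rightarrow> real \<Rightarrow> 'm \<Rightarrow> real" where
  "sympot act phi I z = (SUP \<rho>. I * \<rho> - phi (act \<rho> z))"

text \<open>\<open>tau(z,E)\<close>: the time with \<open>e\<^sup>\<tau> \<cdot> z_E = z\<close>, i.e. \<open>z_E = e\<^sup>-\<^sup>\<tau> \<cdot> z\<close> and \<open>H z_E = E\<close>.\<close>
definition tau :: "(real \<Rightarrow> 'm \<Rightarrow> 'm) \<Rightarrow> ('m \<Rightarrow> real) \<Rightarrow> 'm \<Rightarrow> real \<Rightarrow> real" where
  "tau act H z E = (THE t. H (act (- t) z) = E)"

definition bfun :: "(real \<Rightarrow> 'm \<Rightarrow> 'm) \<Rightarrow> ('m \<Rightarrow> real) \<Rightarrow> 'm \<Rightarrow> real \<Rightarrow> real" where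
  "bfun act H z E =
     (let t = tau act H z E; zE = act (- t) z
      in 2 * (LBINT \<sigma>=ereal 0..ereal t. H (act \<sigma> zE) - E))"

definition strict_convex_on :: "real set \<Rightarrow> (real \<Rightarrow> real) \<Rightarrow> bool" where
  "strict_convex_on S f \<longleftrightarrow>
     (\<forall>x\<in>S. \<forall>y\<in>S. x \<noteq> y \<longrightarrow> (\<forall>t. 0 < t \<and> t < 1 \<longrightarrow>
        f ((1 - t) * x + t * y) < (1 - t) * f x + t * f y))"

end

theory Submission
  imports Defs
begin

text \<open>Along the \<open>\<real>\<close>-orbit of \<open>z\<close> the potential restricts to the strictly convex function
  \<open>pot \<rho> = \<phi>(e\<^sup>\<rho> \<cdot> z)\<close>, whose derivative is \<open>2H\<close>. Integrating \<open>H\<close> along the flow from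
  \<open>z\<^sub>E = e\<^sup>-\<^sup>\<tau> \<cdot> z\<close> to \<open>z\<close> gives \<open>b(z, pot'(s)/2) = pot(0) + pot\<^sup>*(pot'(s))\<close> with \<open>pot\<^sup>*\<close> the Legendre
  transform, i.e. \<open>b(z, E) = \<phi>(z) + u(2E; z)\<close>. Legendre duality gives \<open>(pot\<^sup>*)' = (pot')\<^sup>-\<^sup>1\<close> and
  \<open>(pot\<^sup>*)'' = 1 / pot''((pot')\<^sup>-\<^sup>1)\<close>; the strict tangent-line inequality for \<open>pot\<close> transfers to
  \<open>pot\<^sup>*\<close>, giving strict convexity of \<open>b\<close>, and at \<open>s = 0\<close> it gives \<open>b \<ge> 0 = b(z, H(z))\<close>.\<close>

lemma strict_convex_on_if_above_tangents:
  fixes h c :: "real \<Rightarrow> real"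
  assumes "convex S"
    and tangent: "\<And>x m. x \<in> S \<Longrightarrow> m \<in> S \<Longrightarrow> x \<noteq> m \<Longrightarrow> h m + c m * (x - m) < h x"
  shows "strict_convex_on S h"
  unfolding strict_convex_on_def
proof (intro ballI allI impI)
  fix x y t :: real assume x: "x \<in> S" and y: "y \<in> S" and "x \<noteq> y" and t: "0 < t \<and> t < 1"
  define m where "m = (1 - t) * x + t * y"
  have "m \<in> S" unfolding m_def using \<open>convex S\<close> x y t by (simp add: convex_alt)
  moreover have "m - x = t * (y - x)" "m - y = (1 - t) * (x - y)" by (simp_all add: m_def algebra_simps)
  then have "m \<noteq> x" "m \<noteq> y" using \<open>x \<noteq> y\<close> t by auto
  ultimately have "(1 - t) * (h m + c m * (x - m)) + t * (h m + c m * (y - m)) < (1 - t) * h x + t * h y"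
    using tangent x y t by (intro add_strict_mono mult_strict_left_mono) auto
  moreover have "(1 - t) * (h m + c m * (x - m)) + t * (h m + c m * (y - m)) = h m"
    by (simp add: m_def algebra_simps)
  ultimately show "h ((1 - t) * x + t * y) < (1 - t) * h x + t * h y" by (simp add: m_def)
qed

locale twice_differentiable_strictly_convex =
  fixes f f' f'' :: "real \<Rightarrow> real"
  assumes has_deriv: "\<And>x. (f has_real_derivative f' x) (at x)"
    and has_deriv2: "\<And>x. (f' has_real_derivative f'' x) (at x)"
    and deriv2_pos: "\<And>x. 0 < f'' x"
begin

lemma deriv_strict_mono: "strict_mono f'"
proof (rule strict_monoI)
  show "f' x < f' y" if "x < y" for x y
    using that has_deriv2 deriv2_pos by (blast intro: DERIV_pos_imp_increasing)
qed

lemma inj_deriv: "inj f'"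
  by (simp add: deriv_strict_mono strict_mono_on_imp_inj_on)

lemma inv_deriv_deriv [simp]: "inv f' (f' x) = x"
  by (simp add: inj_deriv)

lemma deriv_inv_deriv: "y \<in> range f' \<Longrightarrow> f' (inv f' y) = y"
  by (rule f_inv_into_f)

lemma continuous_deriv: "continuous_on UNIV f'"
  using has_deriv2 by (meson DERIV_isCont continuous_at_imp_continuous_on)

lemma tangent_less: "x \<noteq> c \<Longrightarrow> f c + f' c * (x - c) < f x"
proof (cases "c < x")
  case True
  then obtain \<xi> where "c < \<xi>" "f x - f c = (x - c) * f' \<xi>"
    using MVT2[of c x f f'] has_deriv by blast
  moreover have "(x - c) * f' c < (x - c) * f' \<xi>"
    using True \<open>c < \<xi>\<close> deriv_strict_mono by (simp add: strict_mono_def)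
  ultimately show ?thesis by (simp add: algebra_simps)
next
  case False
  moreover assume "x \<noteq> c"
  ultimately have "x < c" by simp
  then obtain \<xi> where "\<xi> < c" "f c - f x = (c - x) * f' \<xi>"
    using MVT2[of x c f f'] has_deriv by blast
  moreover have "(c - x) * f' \<xi> < (c - x) * f' c"
    using \<open>x < c\<close> \<open>\<xi> < c\<close> deriv_strict_mono by (simp add: strict_mono_def)
  ultimately show ?thesis by (simp add: algebra_simps)
qed

lemma tangent_le: "f c + f' c * (x - c) \<le> f x"
  using tangent_less by (cases "x = c") (auto intro: less_imp_le)

definition legendre :: "real \<Rightarrow> real" where
  "legendre y = (SUP x. y * x - f x)"

lemma legendre_at_deriv: "legendre (f' c) = f' c * c - f c"
  unfolding legendre_def
proof (rule cSup_eq_maximum)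
  show "\<And>v. v \<in> range (\<lambda>x. f' c * x - f x) \<Longrightarrow> v \<le> f' c * c - f c"
    using tangent_le by (force simp: algebra_simps)
qed auto

lemma legendre_eq: "y \<in> range f' \<Longrightarrow> legendre y = y * inv f' y - f (inv f' y)"
  using legendre_at_deriv[of "inv f' y"] by (simp add: deriv_inv_deriv)

lemma legendre_tangent_less:
  assumes "x \<noteq> c" shows "legendre (f' c) + c * (f' x - f' c) < legendre (f' x)"
  using tangent_less[OF assms[symmetric]] by (simp add: legendre_at_deriv algebra_simps)

lemma is_interval_range_deriv: "is_interval (range f')"
  using continuous_deriv by (simp add: is_interval_connected_1 connected_continuous_image)

lemma interval_subset_range_deriv: "{f' a <..< f' b} \<subseteq> range f'"
proof
  fix x assume "x \<in> {f' a <..< f' b}"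
  then have "f' a \<le> x" "x \<le> f' b" by auto
  with is_interval_range_deriv show "x \<in> range f'"
    unfolding is_interval_1 by blast
qed

lemma open_range_deriv: "open (range f')"
proof -
  have "f' c \<in> {f' (c - 1) <..< f' (c + 1)}" for c
    using deriv_strict_mono by (simp add: strict_monoD)
  then have "range f' = (\<Union>c. {f' (c - 1) <..< f' (c + 1)})"
    using interval_subset_range_deriv by blast
  then show ?thesis by auto
qed

lemma inv_deriv_has_derivative: "(inv f' has_real_derivative inverse (f'' c)) (at (f' c))"
proof -
  have "(\<lambda>x. f'' c * x) \<circ> (\<lambda>x. inverse (f'' c) * x) = id"
    using deriv2_pos[of c] by (simp add: fun_eq_iff)
  then show ?thesis
    using has_derivative_inverse_strong[of UNIV c f' "inv f'"] has_deriv2[of c] continuous_deriv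
    by (simp add: has_field_derivative_def)
qed

lemma legendre_has_derivative: "(legendre has_real_derivative c) (at (f' c))"
proof -
  have "((\<lambda>y. f (inv f' y)) has_real_derivative f' c * inverse (f'' c)) (at (f' c))"
    using DERIV_chain2[OF _ inv_deriv_has_derivative, of f "f' c"] has_deriv[of c] by simp
  then have "((\<lambda>y. y * inv f' y - f (inv f' y)) has_real_derivative c) (at (f' c))"
    using inv_deriv_has_derivative[of c] by (auto intro!: derivative_eq_intros)
  then show ?thesis
    by (rule has_field_derivative_transform_within_open[OF _ open_range_deriv])
      (auto simp: legendre_eq)
qed

end

lemma deriv_shift: "deriv (\<lambda>x. f (x + s)) = (\<lambda>x. deriv f (x + s))"
  for f :: "real \<Rightarrow> real"
proof
  fix x
  have "deriv (\<lambda>x. f (x + s)) x = deriv ((\<lambda>x. f (x + s)) \<circ> (\<lambda>y. x + y)) 0"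
    by (rule deriv_shift_0)
  also have "\<dots> = deriv (f \<circ> (\<lambda>y. (x + s) + y)) 0"
    by (simp add: comp_def algebra_simps)
  also have "\<dots> = deriv f (x + s)"
    by (rule deriv_shift_0[symmetric])
  finally show "deriv (\<lambda>x. f (x + s)) x = deriv f (x + s)" .
qed

locale hamiltonian_orbit =
  fixes act :: "real \<Rightarrow> 'm \<Rightarrow> 'm" and phi H :: "'m \<Rightarrow> real" and z :: 'm
  assumes act_0: "\<And>w. act 0 w = w"
    and act_add: "\<And>s t w. act (s + t) w = act s (act t w)"
    and pot_twice_differentiable:
      "\<And>r. ((\<lambda>\<rho>. phi (act \<rho> z)) has_real_derivative deriv (\<lambda>\<rho>. phi (act \<rho> z)) r) (at r)
                   \<and> (deriv (\<lambda>\<rho>. phi (act \<rho> z)) has_real_derivative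
                        deriv (deriv (\<lambda>\<rho>. phi (act \<rho> z))) r) (at r)"
    and pot_deriv2_pos: "\<And>r. 0 < deriv (deriv (\<lambda>\<rho>. phi (act \<rho> z))) r"
    and H_phi: "\<And>w. H w = rho_deriv act phi w / 2"
begin

definition pot :: "real \<Rightarrow> real" where
  "pot = (\<lambda>\<rho>. phi (act \<rho> z))"

sublocale twice_differentiable_strictly_convex pot "deriv pot" "deriv (deriv pot)"
  using pot_twice_differentiable pot_deriv2_pos by unfold_locales (simp_all add: pot_def)

lemma phi_orbit: "phi (act r (act s z)) = pot (r + s)"
  by (simp add: pot_def act_add)

lemma rho_deriv_orbit: "rho_deriv act phi (act s z) = deriv pot s"
  by (simp add: rho_deriv_def phi_orbit deriv_shift)

lemma rho_deriv2_orbit: "rho_deriv2 act phi (act s z) = deriv (deriv pot) s"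
  by (simp add: rho_deriv2_def phi_orbit deriv_shift)

lemma H_orbit: "H (act s z) = deriv pot s / 2"
  by (simp add: H_phi rho_deriv_orbit)

lemma tau_orbit: "tau act H z (deriv pot s / 2) = - s"
  unfolding tau_def
  by (rule the_equality) (auto simp: H_orbit inj_eq[OF inj_deriv])

lemma integral_H_orbit:
  "(LBINT \<sigma>=ereal 0..ereal t. H (act \<sigma> (act s z)) - c) = (pot (t + s) - pot s) / 2 - c * t"
proof -
  let ?F = "\<lambda>\<sigma>. pot (\<sigma> + s) / 2 - c * \<sigma>"
  have "(LBINT \<sigma>=ereal 0..ereal t. deriv pot (\<sigma> + s) / 2 - c) = ?F t - ?F 0"
  proof (rule interval_integral_FTC_finite)
    show "continuous_on {min 0 t..max 0 t} (\<lambda>\<sigma>. deriv pot (\<sigma> + s) / 2 - c)"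
      by (intro continuous_intros continuous_on_compose2[OF continuous_deriv]) auto
    show "(?F has_vector_derivative deriv pot (x + s) / 2 - c) (at x within {min 0 t..max 0 t})" for x
    proof -
      have "((\<lambda>\<sigma>. pot (\<sigma> + s)) has_real_derivative deriv pot (x + s)) (at x)"
        using has_deriv DERIV_shift by blast
      then have "(?F has_real_derivative deriv pot (x + s) / 2 - c * 1) (at x)"
        by (intro DERIV_diff DERIV_cdivide DERIV_cmult DERIV_ident)
      then show ?thesis
        by (simp add: has_real_derivative_iff_has_vector_derivative has_vector_derivative_at_within)
    qed
  qed
  then show ?thesis by (simp add: H_orbit zero_ereal_def algebra_simps flip: act_add)
qed

lemma phi_base: "phi z = pot 0"
  by (simp add: pot_def act_0)

lemma bfun_orbit: "bfun act H z (deriv pot s / 2) = phi z + legendre (deriv pot s)"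
proof -
  have "bfun act H z (deriv pot s / 2)
      = 2 * (LBINT \<sigma>=ereal 0..ereal (- s). H (act \<sigma> (act s z)) - deriv pot s / 2)"
    by (simp add: bfun_def tau_orbit)
  also have "\<dots> = pot 0 - pot s + deriv pot s * s"
    unfolding integral_H_orbit by (simp add: field_simps)
  finally show ?thesis by (simp add: phi_base legendre_at_deriv)
qed

lemma sympot_eq_legendre: "sympot act phi I z = legendre I"
  by (simp only: sympot_def legendre_def) (simp add: pot_def)

lemma bfun_eq_legendre:
  assumes "2 * e \<in> range (deriv pot)" shows "bfun act H z e = phi z + legendre (2 * e)"
proof -
  obtain s where s: "2 * e = deriv pot s" using assms by blast
  from bfun_orbit[of s] show ?thesis by (simp flip: s)
qed

lemma open_scaled_range_deriv: "open {e. 2 * e \<in> range (deriv pot)}"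
  using continuous_open_vimage[OF open_range_deriv, of "\<lambda>e. 2 * e"] by (simp add: vimage_def)

lemma bfun_has_derivative: "(bfun act H z has_real_derivative 2 * s) (at (deriv pot s / 2))"
proof -
  have "(legendre has_real_derivative s) (at (2 * (deriv pot s / 2)))"
    using legendre_has_derivative by simp
  then have "((\<lambda>e. legendre (2 * e)) has_real_derivative s * 2) (at (deriv pot s / 2))"
    by (rule DERIV_chain2[where g="\<lambda>e. 2 * e"]) (auto intro!: derivative_eq_intros)
  then have "((\<lambda>e. phi z + legendre (2 * e)) has_real_derivative 2 * s) (at (deriv pot s / 2))"
    by (auto intro!: derivative_eq_intros)
  then show ?thesis
    by (rule has_field_derivative_transform_within_open[OF _ open_scaled_range_deriv])
      (auto simp: bfun_eq_legendre)
qed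

lemma deriv_bfun_eq:
  assumes "2 * e \<in> range (deriv pot)" shows "deriv (bfun act H z) e = 2 * inv (deriv pot) (2 * e)"
  using bfun_has_derivative[of "inv (deriv pot) (2 * e)"] assms
  by (simp add: DERIV_imp_deriv deriv_inv_deriv)

lemma deriv_bfun_has_derivative:
  "(deriv (bfun act H z) has_real_derivative 4 / deriv (deriv pot) s) (at (deriv pot s / 2))"
proof -
  have "(inv (deriv pot) has_real_derivative inverse (deriv (deriv pot) s)) (at (2 * (deriv pot s / 2)))"
    using inv_deriv_has_derivative by simp
  then have "((\<lambda>e. inv (deriv pot) (2 * e)) has_real_derivative
               inverse (deriv (deriv pot) s) * 2) (at (deriv pot s / 2))"
    by (rule DERIV_chain2[where g="\<lambda>e. 2 * e"]) (auto intro!: derivative_eq_intros)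
  then have "((\<lambda>e. 2 * inv (deriv pot) (2 * e)) has_real_derivative
               4 / deriv (deriv pot) s) (at (deriv pot s / 2))"
    by (auto intro!: derivative_eq_intros simp: field_simps)
  then show ?thesis
    by (rule has_field_derivative_transform_within_open[OF _ open_scaled_range_deriv])
      (auto simp: deriv_bfun_eq)
qed

lemma bfun_strict_convex: "strict_convex_on (range (\<lambda>s. H (act s z))) (bfun act H z)"
proof (rule strict_convex_on_if_above_tangents)
  have "continuous_on UNIV (\<lambda>s. H (act s z))"
    unfolding H_orbit by (intro continuous_intros continuous_deriv) auto
  then have "connected (range (\<lambda>s. H (act s z)))"
    by (rule connected_continuous_image[OF _ connected_UNIV])
  then show "convex (range (\<lambda>s. H (act s z)))"
    by (simp add: is_interval_convex_1[symmetric] is_interval_connected_1)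
next
  fix x m assume "x \<in> range (\<lambda>s. H (act s z))" "m \<in> range (\<lambda>s. H (act s z))" "x \<noteq> m"
  then obtain a c where x: "x = deriv pot a / 2" and m: "m = deriv pot c / 2"
    by (auto simp: H_orbit)
  with \<open>x \<noteq> m\<close> have "a \<noteq> c" by auto
  then show "bfun act H z m + 2 * inv (deriv pot) (2 * m) * (x - m) < bfun act H z x"
    unfolding x m using legendre_tangent_less[of a c] by (simp add: bfun_orbit algebra_simps)
qed

lemma H_base: "H z = deriv pot 0 / 2"
  using H_orbit[of 0] by (simp add: act_0)

lemma bfun_H_zero: "bfun act H z (H z) = 0"
  using bfun_orbit[of 0] by (simp add: H_base legendre_at_deriv phi_base)

lemma bfun_nonneg: "0 \<le> bfun act H z (H (act s z))"
  using tangent_le[of s 0] by (simp add: H_orbit bfun_orbit legendre_at_deriv phi_base algebra_simps)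

end

theorem lemma2p5:
  fixes act :: "real \<Rightarrow> 'm \<Rightarrow> 'm" and phi H :: "'m \<Rightarrow> real"
    and z zE :: 'm and E \<tau> :: real
  assumes act_0: "\<And>w. act 0 w = w"
    and act_add: "\<And>s t w. act (s + t) w = act s (act t w)"
    and phi_C2: "\<And>w r. ((\<lambda>\<rho>. phi (act \<rho> w)) has_real_derivative
                          deriv (\<lambda>\<rho>. phi (act \<rho> w)) r) (at r)
                   \<and> (deriv (\<lambda>\<rho>. phi (act \<rho> w)) has_real_derivative
                          deriv (deriv (\<lambda>\<rho>. phi (act \<rho> w))) r) (at r)"
    and phi_C2_cont: "\<And>w. continuous_on UNIV (deriv (deriv (\<lambda>\<rho>. phi (act \<rho> w))))"
    and phi_strict: "\<And>w r. deriv (deriv (\<lambda>\<rho>. phi (act \<rho> w))) r > 0"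
    and H_phi: "\<And>w. H w = rho_deriv act phi w / 2"
    and E_range: "E \<in> range H"
    and zE_orbit: "\<exists>s. zE = act s z"
    and zE_level: "H zE = E"
    and tau_def: "act \<tau> zE = z"
  shows "bfun act H z E = phi z + sympot act phi (2 * E) z
         \<and> ((\<lambda>e. bfun act H z e) has_real_derivative (- 2 * \<tau>)) (at E)
         \<and> ((\<lambda>e. deriv (\<lambda>e'. bfun act H z e') e) has_real_derivative
               (4 / rho_deriv2 act phi zE)) (at E)
         \<and> strict_convex_on (range (\<lambda>s. H (act s z))) (\<lambda>e. bfun act H z e)
         \<and> bfun act H z (H z) = 0
         \<and> (\<forall>e\<in>range (\<lambda>s. H (act s z)). bfun act H z e \<ge> 0)"
proof -
  interpret hamiltonian_orbit act phi H z
    using act_0 act_add phi_C2 phi_strict H_phi by unfold_locales blast+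
  obtain s where zE: "zE = act s z" using zE_orbit by blast
  have E: "E = deriv pot s / 2" using zE_level by (simp add: zE H_orbit)
  have "H (act (\<tau> + s) z) = H z" using tau_def by (simp add: zE act_add)
  then have \<tau>: "\<tau> = - s" by (simp add: H_orbit H_base inj_eq[OF inj_deriv])
  show ?thesis
    using bfun_orbit[of s] bfun_has_derivative[of s] deriv_bfun_has_derivative[of s]
      bfun_strict_convex bfun_H_zero bfun_nonneg
    by (auto simp: E \<tau> zE sympot_eq_legendre rho_deriv2_orbit)
qed

end
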